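(* Let $T$ be a split Leibniz triple system with symmetric root system $\Lambda^1$, and suppose $\Lambda^0$ is symmetric. Then: (1) for every $\alpha_0\in\Lambda^1$, the subspace $T_{\Lambda^1_{\alpha_0}}=T_{0,\Lambda^1_{\alpha_0}}\oplus V_{\Lambda^1_{\alpha_0}}$ is an ideal of $T$, where $T_{0,\Lambda^1_{\alpha_0}}=\mathrm{span}_{\mathbb{K}}\{\{T_\alpha,T_\beta,T_\gamma\}:\alpha+\beta+\gamma=0,\ \alpha,\beta,\gamma\in\Lambda^1_{\alpha_0}\cup\{0\}\}\subseteq T_0$ and $V_{\Lambda^1_{\alpha_0}}=\bigoplus_{\gamma\in\Lambda^1_{\alpha_0}}T_\gamma$; (2) if $T$ is simple, then any two roots $\alpha,\beta\in\Lambda^1$ are connected (there is a connection from $\alpha$ to $\beta$).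
   Context: A Leibniz triple system is a vector space $T$ over a field $\mathbb{K}$ with a trilinear product $\{\cdot,\cdot,\cdot\}$ satisfying, for all $a,b,c,d,e\in T$: $\{a,\{b,c,d\},e\}=\{\{a,b,c\},d,e\}-\{\{a,c,b\},d,e\}-\{\{a,d,b\},c,e\}+\{\{a,d,c\},b,e\}$ and $\{a,b,\{c,d,e\}\}=\{\{a,b,c\},d,e\}-\{\{a,b,d\},c,e\}-\{\{a,b,e\},c,d\}+\{\{a,b,e\},d,c\}$. An ideal of $T$ is a subspace $I$ with $\{I,T,T\}+\{T,I,T\}+\{T,T,I\}\subseteq I$. Let $J$ be the ideal of $T$ generated by $\{\{a,b,c\}-\{a,c,b\}+\{b,c,a\}:a,b,c\in T\}$. $T$ is simple if its product is nonzero and its only ideals are $\{0\}$, $J$ and $T$. Its standard embedding is the right Leibniz algebra $L=L^0\oplus L^1$ ($L^0$ the span of symbols $x\otimes y$, $L^1=T$) with product $[(x\otimes y,z),(u\otimes v,w)]=(\{x,y,u\}\otimes v-\{x,y,v\}\otimes u+z\otimes w,\ \{x,y,w\}+\{z,u,v\}-\{z,v,u\})$; so $[x,y]=x\otimes y$ and $\{x,y,z\}=[[x,y],z]$ for $x,y,z\in T$. Let $H^0$ be a maximal abelian subalgebra of $L^0$; for $\alpha\in(H^0)^*$ put $T_\alpha=\{t\in T:[t,h]=\alpha(h)t\ \forall h\in H^0\}$, $L^0_\alpha=\{v\in L^0:[v,h]=\alpha(h)v\ \forall h\in H^0\}$, $\Lambda^1=\{\alpha\neq0:T_\alpha\neq0\}$,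 $\Lambda^0=\{\alpha\neq0:L^0_\alpha\neq0\}$. $T$ is split (w.r.t. $H^0$) if $T=T_0\oplus\bigoplus_{\alpha\in\Lambda^1}T_\alpha$, $\{T_0,T_0,T_0\}=0$ and $\{T_\alpha,T_{-\alpha},T_0\}=0$ for all $\alpha\in\Lambda^1$. A set $\Lambda\subset(H^0)^*$ is symmetric if $\alpha\in\Lambda$ implies $-\alpha\in\Lambda$. Two roots $\alpha,\beta\in\Lambda^1$ are connected if there is a family $\alpha_1,\dots,\alpha_{2n+1}\in\Lambda^1\cup\{0\}$ with: $\alpha_1+\dots+\alpha_{2k+1}\in\Lambda^1$ for $k=0,\dots,n$; $\alpha_1+\dots+\alpha_{2k}\in\Lambda^0$ for $k=1,\dots,n$; $\alpha_1=\alpha$ and $\alpha_1+\dots+\alpha_{2n+1}\in\{\beta,-\beta\}$. $\Lambda^1_{\alpha_0}$ denotes the set of $\beta\in\Lambda^1$ connected with $\alpha_0$. *)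

theory Defs
  imports Main "HOL.Vector_Spaces"
begin

definition trilinear :: "('k::field \<Rightarrow> 'v::ab_group_add \<Rightarrow> 'v) \<Rightarrow> ('v \<Rightarrow> 'v \<Rightarrow> 'v \<Rightarrow> 'v) \<Rightarrow> bool" where
  "trilinear sc tp \<longleftrightarrow>
     (\<forall>b c. Vector_Spaces.linear sc sc (\<lambda>a. tp a b c)) \<and>
     (\<forall>a c. Vector_Spaces.linear sc sc (\<lambda>b. tp a b c)) \<and>
     (\<forall>a b. Vector_Spaces.linear sc sc (\<lambda>c. tp a b c))"

definition leibniz_triple_system :: "('k::field \<Rightarrow> 'v::ab_group_add \<Rightarrow> 'v) \<Rightarrow> ('v \<Rightarrow> 'v \<Rightarrow> 'v \<Rightarrow> 'v) \<Rightarrow> bool" where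
  "leibniz_triple_system sc tp \<longleftrightarrow>
     vector_space sc \<and> trilinear sc tp \<and>
     (\<forall>a b c d e. tp a (tp b c d) e =
         tp (tp a b c) d e - tp (tp a c b) d e - tp (tp a d b) c e + tp (tp a d c) b e) \<and>
     (\<forall>a b c d e. tp a b (tp c d e) =
         tp (tp a b c) d e - tp (tp a b d) c e - tp (tp a b e) c d + tp (tp a b e) d c)"

definition lts_ideal :: "('k::field \<Rightarrow> 'v::ab_group_add \<Rightarrow> 'v) \<Rightarrow> ('v \<Rightarrow> 'v \<Rightarrow> 'v \<Rightarrow> 'v) \<Rightarrow> 'v set \<Rightarrow> bool" where
  "lts_ideal sc tp I \<longleftrightarrow> module.subspace sc I \<and>
     (\<forall>x\<in>I. \<forall>y z. tp x y z \<in> I \<and> tp y x z \<in> I \<and> tp y z x \<in> I)"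

definition lts_J :: "('k::field \<Rightarrow> 'v::ab_group_add \<Rightarrow> 'v) \<Rightarrow> ('v \<Rightarrow> 'v \<Rightarrow> 'v \<Rightarrow> 'v) \<Rightarrow> 'v set" where
  "lts_J sc tp = \<Inter> {I. lts_ideal sc tp I \<and>
      {tp a b c - tp a c b + tp b c a | a b c. True} \<subseteq> I}"

definition lts_simple :: "('k::field \<Rightarrow> 'v::ab_group_add \<Rightarrow> 'v) \<Rightarrow> ('v \<Rightarrow> 'v \<Rightarrow> 'v \<Rightarrow> 'v) \<Rightarrow> bool" where
  "lts_simple sc tp \<longleftrightarrow> (\<exists>a b c. tp a b c \<noteq> 0) \<and>
     (\<forall>I. lts_ideal sc tp I \<longrightarrow> I = {0} \<or> I = lts_J sc tp \<or> I = UNIV)"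

text \<open>
  The even part L0 of the standard embedding.  An element \<Sum> x_i \<otimes> y_i of L0 is
  represented by the pair of operators through which it acts on T:
  (w \<mapsto> [\<Sum> x_i\<otimes>y_i, w] = \<Sum> {x_i,y_i,w},  z \<mapsto> [z, \<Sum> x_i\<otimes>y_i] = \<Sum> ({z,x_i,y_i} - {z,y_i,x_i})).
  Scalars are absorbed into the first tensor factor, so finite lists of pairs suffice.
\<close>

type_synonym 'v l0 = "('v \<Rightarrow> 'v) \<times> ('v \<Rightarrow> 'v)"

definition l0_of :: "('v::ab_group_add \<Rightarrow> 'v \<Rightarrow> 'v \<Rightarrow> 'v) \<Rightarrow> ('v \<times> 'v) list \<Rightarrow> 'v l0" where
  "l0_of tp ps = ((\<lambda>w. sum_list (map (\<lambda>(x,y). tp x y w) ps)),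
                  (\<lambda>z. sum_list (map (\<lambda>(x,y). tp z x y - tp z y x) ps)))"

definition L0 :: "('v::ab_group_add \<Rightarrow> 'v \<Rightarrow> 'v \<Rightarrow> 'v) \<Rightarrow> 'v l0 set" where
  "L0 tp = range (l0_of tp)"

definition l0_zero :: "'v::ab_group_add l0" where
  "l0_zero = ((\<lambda>_. 0), (\<lambda>_. 0))"

definition l0_add :: "'v::ab_group_add l0 \<Rightarrow> 'v l0 \<Rightarrow> 'v l0" where
  "l0_add l m = ((\<lambda>w. fst l w + fst m w), (\<lambda>z. snd l z + snd m z))"

definition l0_scale :: "('k \<Rightarrow> 'v \<Rightarrow> 'v) \<Rightarrow> 'k \<Rightarrow> 'v l0 \<Rightarrow> 'v l0" where
  "l0_scale sc c l = ((\<lambda>w. sc c (fst l w)), (\<lambda>z. sc c (snd l z)))"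

text \<open>Product [x\<otimes>y, u\<otimes>v] = {x,y,u}\<otimes>v - {x,y,v}\<otimes>u, extended bilinearly; the left factor
  l = \<Sum> x_i\<otimes>y_i enters only through w \<mapsto> \<Sum>{x_i,y_i,w} = fst l w.  The right factor is
  evaluated on a chosen representative (the product is well defined on L0).\<close>
definition l0_bracket :: "('v::ab_group_add \<Rightarrow> 'v \<Rightarrow> 'v \<Rightarrow> 'v) \<Rightarrow> 'v l0 \<Rightarrow> 'v l0 \<Rightarrow> 'v l0" where
  "l0_bracket tp l m =
     l0_of tp (concat (map (\<lambda>(u,v). [(fst l u, v), (- fst l v, u)])
                          (SOME ps. l0_of tp ps = m)))"

definition l0_subspace :: "('k::field \<Rightarrow> 'v::ab_group_add \<Rightarrow> 'v) \<Rightarrow> ('v \<Rightarrow> 'v \<Rightarrow> 'v \<Rightarrow> 'v) \<Rightarrow> 'v l0 set \<Rightarrow> bool" where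
  "l0_subspace sc tp H \<longleftrightarrow> H \<subseteq> L0 tp \<and> l0_zero \<in> H \<and>
     (\<forall>h\<in>H. \<forall>h'\<in>H. l0_add h h' \<in> H) \<and> (\<forall>c. \<forall>h\<in>H. l0_scale sc c h \<in> H)"

definition abelian_subalgebra :: "('k::field \<Rightarrow> 'v::ab_group_add \<Rightarrow> 'v) \<Rightarrow> ('v \<Rightarrow> 'v \<Rightarrow> 'v \<Rightarrow> 'v) \<Rightarrow> 'v l0 set \<Rightarrow> bool" where
  "abelian_subalgebra sc tp H \<longleftrightarrow> l0_subspace sc tp H \<and>
     (\<forall>h\<in>H. \<forall>h'\<in>H. l0_bracket tp h h' \<in> H) \<and>
     (\<forall>h\<in>H. \<forall>h'\<in>H. l0_bracket tp h h' = l0_zero)"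

definition maximal_abelian_subalgebra :: "('k::field \<Rightarrow> 'v::ab_group_add \<Rightarrow> 'v) \<Rightarrow> ('v \<Rightarrow> 'v \<Rightarrow> 'v \<Rightarrow> 'v) \<Rightarrow> 'v l0 set \<Rightarrow> bool" where
  "maximal_abelian_subalgebra sc tp H \<longleftrightarrow> abelian_subalgebra sc tp H \<and>
     (\<forall>H'. abelian_subalgebra sc tp H' \<and> H \<subseteq> H' \<longrightarrow> H' = H)"

definition dualH :: "('k::field \<Rightarrow> 'v::ab_group_add \<Rightarrow> 'v) \<Rightarrow> 'v l0 set \<Rightarrow> ('v l0 \<Rightarrow> 'k) set" where
  "dualH sc H = {\<alpha>. (\<forall>h\<in>H. \<forall>h'\<in>H. \<alpha> (l0_add h h') = \<alpha> h + \<alpha> h') \<and>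
                    (\<forall>c. \<forall>h\<in>H. \<alpha> (l0_scale sc c h) = c * \<alpha> h) \<and>
                    (\<forall>h. h \<notin> H \<longrightarrow> \<alpha> h = 0)}"

text \<open>T_alpha = {t. [t,h] = alpha(h) t for all h in H0}, where [t,h] = snd h t.\<close>
definition Troot :: "('k::field \<Rightarrow> 'v::ab_group_add \<Rightarrow> 'v) \<Rightarrow> 'v l0 set \<Rightarrow> ('v l0 \<Rightarrow> 'k) \<Rightarrow> 'v set" where
  "Troot sc H \<alpha> = {t. \<forall>h\<in>H. snd h t = sc (\<alpha> h) t}"

definition L0root :: "('k::field \<Rightarrow> 'v::ab_group_add \<Rightarrow> 'v) \<Rightarrow> ('v \<Rightarrow> 'v \<Rightarrow> 'v \<Rightarrow> 'v) \<Rightarrow> 'v l0 set \<Rightarrow> ('v l0 \<Rightarrow> 'k) \<Rightarrow> 'v l0 set" where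
  "L0root sc tp H \<alpha> = {v \<in> L0 tp. \<forall>h\<in>H. l0_bracket tp v h = l0_scale sc (\<alpha> h) v}"

definition Lambda1 :: "('k::field \<Rightarrow> 'v::ab_group_add \<Rightarrow> 'v) \<Rightarrow> 'v l0 set \<Rightarrow> ('v l0 \<Rightarrow> 'k) set" where
  "Lambda1 sc H = {\<alpha> \<in> dualH sc H. \<alpha> \<noteq> (\<lambda>_. 0) \<and> Troot sc H \<alpha> \<noteq> {0}}"

definition Lambda0 :: "('k::field \<Rightarrow> 'v::ab_group_add \<Rightarrow> 'v) \<Rightarrow> ('v \<Rightarrow> 'v \<Rightarrow> 'v \<Rightarrow> 'v) \<Rightarrow> 'v l0 set \<Rightarrow> ('v l0 \<Rightarrow> 'k) set" where
  "Lambda0 sc tp H = {\<alpha> \<in> dualH sc H. \<alpha> \<noteq> (\<lambda>_. 0) \<and> L0root sc tp H \<alpha> \<noteq> {l0_zero}}"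

definition symmetric_roots :: "('a \<Rightarrow> 'k::ab_group_add) set \<Rightarrow> bool" where
  "symmetric_roots \<Lambda> \<longleftrightarrow> (\<forall>\<alpha>\<in>\<Lambda>. (\<lambda>h. - \<alpha> h) \<in> \<Lambda>)"

definition split_lts :: "('k::field \<Rightarrow> 'v::ab_group_add \<Rightarrow> 'v) \<Rightarrow> ('v \<Rightarrow> 'v \<Rightarrow> 'v \<Rightarrow> 'v) \<Rightarrow> 'v l0 set \<Rightarrow> bool" where
  "split_lts sc tp H \<longleftrightarrow>
     (\<forall>t. \<exists>S f. finite S \<and> S \<subseteq> insert (\<lambda>_. 0) (Lambda1 sc H) \<and>
               (\<forall>\<alpha>\<in>S. f \<alpha> \<in> Troot sc H \<alpha>) \<and> t = (\<Sum>\<alpha>\<in>S. f \<alpha>)) \<and>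
     (\<forall>S f. finite S \<and> S \<subseteq> insert (\<lambda>_. 0) (Lambda1 sc H) \<and>
               (\<forall>\<alpha>\<in>S. f \<alpha> \<in> Troot sc H \<alpha>) \<and> (\<Sum>\<alpha>\<in>S. f \<alpha>) = 0 \<longrightarrow> (\<forall>\<alpha>\<in>S. f \<alpha> = 0)) \<and>
     (\<forall>a\<in>Troot sc H (\<lambda>_. 0). \<forall>b\<in>Troot sc H (\<lambda>_. 0). \<forall>c\<in>Troot sc H (\<lambda>_. 0). tp a b c = 0) \<and>
     (\<forall>\<alpha>\<in>Lambda1 sc H. \<forall>a\<in>Troot sc H \<alpha>. \<forall>b\<in>Troot sc H (\<lambda>h. - \<alpha> h).
         \<forall>c\<in>Troot sc H (\<lambda>_. 0). tp a b c = 0)"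

definition psum :: "(nat \<Rightarrow> 'a \<Rightarrow> 'k::comm_monoid_add) \<Rightarrow> nat \<Rightarrow> 'a \<Rightarrow> 'k" where
  "psum a m = (\<lambda>h. \<Sum>i\<in>{1..m}. a i h)"

definition connected_roots :: "('k::field \<Rightarrow> 'v::ab_group_add \<Rightarrow> 'v) \<Rightarrow> ('v \<Rightarrow> 'v \<Rightarrow> 'v \<Rightarrow> 'v) \<Rightarrow> 'v l0 set \<Rightarrow> ('v l0 \<Rightarrow> 'k) \<Rightarrow> ('v l0 \<Rightarrow> 'k) \<Rightarrow> bool" where
  "connected_roots sc tp H \<alpha> \<beta> \<longleftrightarrow>
     (\<exists>n::nat. \<exists>a::nat \<Rightarrow> 'v l0 \<Rightarrow> 'k.
        (\<forall>i\<in>{1..2*n+1}. a i \<in> insert (\<lambda>_. 0) (Lambda1 sc H)) \<and>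
        (\<forall>k\<le>n. psum a (2*k+1) \<in> Lambda1 sc H) \<and>
        (\<forall>k\<in>{1..n}. psum a (2*k) \<in> Lambda0 sc tp H) \<and>
        a 1 = \<alpha> \<and>
        (psum a (2*n+1) = \<beta> \<or> psum a (2*n+1) = (\<lambda>h. - \<beta> h)))"

definition conn_class :: "('k::field \<Rightarrow> 'v::ab_group_add \<Rightarrow> 'v) \<Rightarrow> ('v \<Rightarrow> 'v \<Rightarrow> 'v \<Rightarrow> 'v) \<Rightarrow> 'v l0 set \<Rightarrow> ('v l0 \<Rightarrow> 'k) \<Rightarrow> ('v l0 \<Rightarrow> 'k) set" where
  "conn_class sc tp H \<alpha>0 = {\<beta> \<in> Lambda1 sc H. connected_roots sc tp H \<alpha>0 \<beta>}"

definition T0_part :: "('k::field \<Rightarrow> 'v::ab_group_add \<Rightarrow> 'v) \<Rightarrow> ('v \<Rightarrow> 'v \<Rightarrow> 'v \<Rightarrow> 'v) \<Rightarrow> 'v l0 set \<Rightarrow> ('v l0 \<Rightarrow> 'k) set \<Rightarrow> 'v set" where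
  "T0_part sc tp H \<Lambda> = module.span sc
     {tp x y z | x y z \<alpha> \<beta> \<gamma>. \<alpha> \<in> insert (\<lambda>_. 0) \<Lambda> \<and> \<beta> \<in> insert (\<lambda>_. 0) \<Lambda> \<and>
        \<gamma> \<in> insert (\<lambda>_. 0) \<Lambda> \<and> (\<lambda>h. \<alpha> h + \<beta> h + \<gamma> h) = (\<lambda>_. 0) \<and>
        x \<in> Troot sc H \<alpha> \<and> y \<in> Troot sc H \<beta> \<and> z \<in> Troot sc H \<gamma>}"

definition V_part :: "('k::field \<Rightarrow> 'v::ab_group_add \<Rightarrow> 'v) \<Rightarrow> 'v l0 set \<Rightarrow> ('v l0 \<Rightarrow> 'k) set \<Rightarrow> 'v set" where
  "V_part sc H \<Lambda> = module.span sc (\<Union>\<gamma>\<in>\<Lambda>. Troot sc H \<gamma>)"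

definition T_Lambda :: "('k::field \<Rightarrow> 'v::ab_group_add \<Rightarrow> 'v) \<Rightarrow> ('v \<Rightarrow> 'v \<Rightarrow> 'v \<Rightarrow> 'v) \<Rightarrow> 'v l0 set \<Rightarrow> ('v l0 \<Rightarrow> 'k) set \<Rightarrow> 'v set" where
  "T_Lambda sc tp H \<Lambda> = {x + y | x y. x \<in> T0_part sc tp H \<Lambda> \<and> y \<in> V_part sc H \<Lambda>}"

end

(*
  Right multiplication by an element of L^0 acts on T as a derivation of the triple product,
  so {T_a, T_b, T_c} lies in T_(a+b+c), and x (tensor) y <> 0 with x in T_a, y in T_b makes
  a + b zero or a root of L^0.  Hence, if {x, y, z} <> 0 for x, y, z in the root spaces of
  a1, a2, a3, the nonzero ones among a1, a2, a3, a1 + a2 + a3 are all connected to a common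
  root; the splitting conditions exclude the degenerate cases.  Connection being an equivalence
  relation up to sign, a nonzero product one of whose roots lies in the class of alpha_0 has all
  its roots in the class or zero.  By trilinearity, T_(class of alpha_0) is then an ideal as soon
  as its generators multiply root vectors into it; for a generator of its T_0 part and root
  vectors outside the class the products vanish, as the Leibniz identities show.  Directness of
  the root decomposition lets a root space meet this ideal only for roots of the class.  In a
  simple T the ideals of two roots are each J or T, so one contains a root vector of the other.
*)
theory Submission
  imports Defs "HOL-Library.Function_Algebras"
begin

context module
begin

lemma in_span_UN_subspaces_sum:
  assumes "x \<in> span (\<Union>\<kappa>\<in>K. U \<kappa>)" and "\<And>\<kappa>. \<kappa> \<in> K \<Longrightarrow> subspace (U \<kappa>)"
  shows "\<exists>S g. finite S \<and> S \<subseteq> K \<and> (\<forall>\<kappa>\<in>S. g \<kappa> \<in> U \<kappa>) \<and> x = sum g S"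
  using assms(1)
proof (induction rule: span_induct_alt)
  case base
  show ?case by (rule exI[of _ "{}"]) simp
next
  case (step c u y)
  then obtain \<kappa> S g where \<kappa>: "\<kappa> \<in> K" "u \<in> U \<kappa>"
    and S: "finite S" "S \<subseteq> K" "\<forall>\<kappa>\<in>S. g \<kappa> \<in> U \<kappa>" "y = sum g S"
    by blast
  define g' where "g' = g(\<kappa> := c *s u + (if \<kappa> \<in> S then g \<kappa> else 0))"
  have "sum g' (insert \<kappa> S) = g' \<kappa> + sum g (S - {\<kappa>})"
    using S(1) by (simp add: sum.insert_remove g'_def)
  moreover have "y = (if \<kappa> \<in> S then g \<kappa> else 0) + sum g (S - {\<kappa>})"
    using S(1,4) by (simp add: sum.remove)
  ultimately have "c *s u + y = sum g' (insert \<kappa> S)"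
    by (simp add: g'_def add.assoc)
  moreover have "\<forall>\<mu>\<in>insert \<kappa> S. g' \<mu> \<in> U \<mu>"
    using S \<kappa> assms(2) by (auto simp: g'_def subspace_add subspace_scale subspace_0)
  ultimately show ?case
    using S \<kappa> by (intro exI[of _ "insert \<kappa> S"] exI[of _ g']) auto
qed

end

lemma psum_Suc: "psum a (Suc m) = psum a m + a (Suc m)"
  by (simp add: psum_def fun_eq_iff)

lemma psum_cong: "(\<And>i. 1 \<le> i \<Longrightarrow> i \<le> m \<Longrightarrow> a i = b i) \<Longrightarrow> psum a m = psum b m"
  by (simp add: psum_def)

locale leibniz_triple =
  fixes sc :: "'k::field \<Rightarrow> 'v::ab_group_add \<Rightarrow> 'v" and tp :: "'v \<Rightarrow> 'v \<Rightarrow> 'v \<Rightarrow> 'v"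
  assumes leibniz_triple_system: "leibniz_triple_system sc tp"
begin

sublocale vs: vector_space sc
  using leibniz_triple_system unfolding leibniz_triple_system_def by blast

lemma
  shows linear_tp1: "module_hom sc sc (\<lambda>a. tp a b c)"
    and linear_tp2: "module_hom sc sc (\<lambda>b. tp a b c)"
    and linear_tp3: "module_hom sc sc (\<lambda>c. tp a b c)"
  using leibniz_triple_system
  unfolding leibniz_triple_system_def trilinear_def module_hom_iff_linear by blast+

lemmas tp_add1 = module_hom.add[OF linear_tp1]
  and tp_add2 = module_hom.add[OF linear_tp2]
  and tp_add3 = module_hom.add[OF linear_tp3]
  and tp_diff1 = module_hom.diff[OF linear_tp1]
  and tp_diff2 = module_hom.diff[OF linear_tp2]
  and tp_diff3 = module_hom.diff[OF linear_tp3]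
  and tp_minus1 = module_hom.neg[OF linear_tp1]
  and tp_minus2 = module_hom.neg[OF linear_tp2]
  and tp_minus3 = module_hom.neg[OF linear_tp3]
  and tp_scale1 = module_hom.scale[OF linear_tp1]
  and tp_scale2 = module_hom.scale[OF linear_tp2]
  and tp_scale3 = module_hom.scale[OF linear_tp3]

lemmas tp_zero1 [simp] = module_hom.zero[OF linear_tp1]
  and tp_zero2 [simp] = module_hom.zero[OF linear_tp2]
  and tp_zero3 [simp] = module_hom.zero[OF linear_tp3]

lemmas tp_additive = tp_add1 tp_add2 tp_add3 tp_diff1 tp_diff2 tp_diff3 tp_minus1 tp_minus2 tp_minus3
lemmas tp_scale = tp_scale1 tp_scale2 tp_scale3

lemma leibniz_identity2:
  "tp a (tp b c d) e = tp (tp a b c) d e - tp (tp a c b) d e - tp (tp a d b) c e + tp (tp a d c) b e"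
  using leibniz_triple_system unfolding leibniz_triple_system_def by blast

lemma leibniz_identity3:
  "tp a b (tp c d e) = tp (tp a b c) d e - tp (tp a b d) c e - tp (tp a b e) c d + tp (tp a b e) d c"
  using leibniz_triple_system unfolding leibniz_triple_system_def by blast

lemma subspace_tp_preimage:
  assumes "vs.subspace I"
  shows "vs.subspace {x. tp x y z \<in> I}" "vs.subspace {y. tp x y z \<in> I}" "vs.subspace {z. tp x y z \<in> I}"
  using assms unfolding vs.subspace_def by (simp_all add: tp_additive tp_scale)

text \<open>In these expansions \<open>a\<close> and \<open>b\<close> occur only together, in inner products not containing \<open>c\<close>.\<close>
lemma tp_tp_expand1:
  "tp (tp a b c) y z = tp a b (tp c y z) + tp (tp a b y) c z + tp (tp a b z) c y - tp (tp a b z) y c"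
  unfolding leibniz_identity3[of a b c y z] by (simp add: algebra_simps)

lemma tp_tp_expand2:
  "tp y (tp a b c) z =
     tp (tp y a b) c z - tp (tp y b a) c z - tp y c (tp a b z) - tp (tp y c z) a b + tp (tp y c z) b a"
  unfolding leibniz_identity2[of y a b c z] leibniz_identity3[of y c a b z] by (simp add: algebra_simps)

lemma tp_tp_expand3:
  "tp y z (tp a b c) =
     tp y (tp z a b) c - tp y (tp z b a) c + tp (tp y a b) z c - tp (tp y b a) z c -
     tp (tp y z c) a b + tp (tp y z c) b a"
  unfolding leibniz_identity3[of y z a b c] leibniz_identity2[of y z a b c] leibniz_identity2[of y z b a c]
  by (simp add: algebra_simps)

definition rmul :: "('v \<times> 'v) list \<Rightarrow> 'v \<Rightarrow> 'v" where
  "rmul ps z = (\<Sum>(x, y) \<leftarrow> ps. tp z x y - tp z y x)"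

lemma rmul_Nil [simp]: "rmul [] z = 0"
  by (simp add: rmul_def)

lemma rmul_Cons [simp]: "rmul ((u, v) # ps) z = tp z u v - tp z v u + rmul ps z"
  by (simp add: rmul_def)

lemma snd_l0_of: "snd (l0_of tp ps) = rmul ps"
  by (auto simp: l0_of_def rmul_def fun_eq_iff)

lemma rmul_zero [simp]: "rmul ps 0 = 0"
  by (induction ps) auto

lemma rmul_add: "rmul ps (x + y) = rmul ps x + rmul ps y"
  by (induction ps) (auto simp: tp_additive algebra_simps)

lemma rmul_scale: "rmul ps (sc r x) = sc r (rmul ps x)"
  by (induction ps) (auto simp: tp_scale1 vs.scale_right_distrib vs.scale_right_diff_distrib)

lemma rmul_tp: "rmul ps (tp a b c) = tp (rmul ps a) b c + tp a (rmul ps b) c + tp a b (rmul ps c)"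
proof (induction ps)
  case (Cons p ps)
  obtain u v where p: "p = (u, v)" by fastforce
  have "tp (tp a b c) u v - tp (tp a b c) v u =
      tp (tp a u v - tp a v u) b c + tp a (tp b u v - tp b v u) c + tp a b (tp c u v - tp c v u)"
    unfolding tp_additive leibniz_identity3[of a b c u v] leibniz_identity3[of a b c v u]
      leibniz_identity2[of a b u v c] leibniz_identity2[of a b v u c]
    by (simp add: algebra_simps)
  then show ?case
    using Cons.IH by (simp add: p tp_additive algebra_simps)
qed simp

lemma l0_bracket_pair_fst:
  "tp (tp a b u) v w - tp (tp a b v) u w =
     tp (rmul [(u, v)] a) b w + tp a (rmul [(u, v)] b) w"
  unfolding rmul_Cons rmul_Nil tp_additive leibniz_identity2[of a b u v w] leibniz_identity2[of a b v u w]
  by (simp add: algebra_simps)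

lemma l0_bracket_pair_snd:
  "tp z (tp a b u) v - tp z v (tp a b u) - tp z (tp a b v) u + tp z u (tp a b v) =
     tp z (rmul [(u, v)] a) b - tp z b (rmul [(u, v)] a) + tp z a (rmul [(u, v)] b) - tp z (rmul [(u, v)] b) a"
proof -
  have "rmul [(u, v)] (tp z a b) - rmul [(u, v)] (tp z b a) =
      tp (rmul [(u, v)] z) a b + tp z (rmul [(u, v)] a) b + tp z a (rmul [(u, v)] b) -
      (tp (rmul [(u, v)] z) b a + tp z (rmul [(u, v)] b) a + tp z b (rmul [(u, v)] a))"
    by (simp only: rmul_tp)
  then show ?thesis
    unfolding rmul_Cons rmul_Nil tp_additive leibniz_identity2[of z a b u v] leibniz_identity2[of z a b v u]
      leibniz_identity3[of z v a b u] leibniz_identity3[of z u a b v]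
    by (simp add: algebra_simps)
qed

lemma fst_l0_of: "fst (l0_of tp ps) w = (\<Sum>(x, y) \<leftarrow> ps. tp x y w)"
  by (simp add: l0_of_def)

text \<open>The bracket \<open>[a \<otimes> b, h] = [a, h] \<otimes> b + a \<otimes> [b, h]\<close> in \<open>L\<^sup>0\<close>, computed on representatives.\<close>
lemma l0_of_bracket_list:
  "l0_of tp (concat (map (\<lambda>(u, v). [(tp a b u, v), (- tp a b v, u)]) ps)) =
     l0_of tp [(rmul ps a, b), (a, rmul ps b)]"
    (is "l0_of tp (?br ps) = _")
proof (rule prod_eqI; rule ext)
  show "fst (l0_of tp (?br ps)) w = fst (l0_of tp [(rmul ps a, b), (a, rmul ps b)]) w" for w
  proof (induction ps)
    case (Cons p ps)
    obtain u v where p: "p = (u, v)" by fastforce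
    have "fst (l0_of tp (?br (p # ps))) w =
        (tp (tp a b u) v w - tp (tp a b v) u w) + fst (l0_of tp (?br ps)) w"
      by (simp add: p fst_l0_of tp_minus1)
    then show ?case
      unfolding Cons.IH l0_bracket_pair_fst by (simp add: p fst_l0_of tp_additive)
  qed (simp add: fst_l0_of)
  show "snd (l0_of tp (?br ps)) z = snd (l0_of tp [(rmul ps a, b), (a, rmul ps b)]) z" for z
  proof (induction ps)
    case (Cons p ps)
    obtain u v where p: "p = (u, v)" by fastforce
    have "snd (l0_of tp (?br (p # ps))) z =
        (tp z (tp a b u) v - tp z v (tp a b u) - tp z (tp a b v) u + tp z u (tp a b v)) +
        snd (l0_of tp (?br ps)) z"
      by (simp add: p snd_l0_of tp_minus2 tp_minus3 algebra_simps)
    then show ?case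
      unfolding Cons.IH l0_bracket_pair_snd by (simp add: p snd_l0_of tp_additive algebra_simps)
  qed (simp add: snd_l0_of)
qed

lemma l0_of_pair_scale:
  "l0_of tp [(sc r a, b), (a, sc s b)] = l0_scale sc (r + s) (l0_of tp [(a, b)])"
  by (simp add: l0_of_def l0_scale_def fun_eq_iff tp_scale vs.scale_left_distrib
      vs.scale_right_diff_distrib algebra_simps)

end

locale lts_root_spaces = leibniz_triple sc tp
  for sc :: "'k::field \<Rightarrow> 'v::ab_group_add \<Rightarrow> 'v" and tp +
  fixes H :: "'v l0 set"
  assumes H_L0: "H \<subseteq> L0 tp"
begin

abbreviation T :: "('v l0 \<Rightarrow> 'k) \<Rightarrow> 'v set" where
  "T \<equiv> Troot sc H"

lemma l0_of_some_H: "h \<in> H \<Longrightarrow> l0_of tp (SOME ps. l0_of tp ps = h) = h"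
  using H_L0 unfolding L0_def by (auto intro: someI)

lemma snd_H_eq_rmul: "h \<in> H \<Longrightarrow> snd h = rmul (SOME ps. l0_of tp ps = h)"
  by (metis l0_of_some_H snd_l0_of)

lemma subspace_Troot: "vs.subspace (T \<mu>)"
  unfolding vs.subspace_def Troot_def
  by (auto simp: snd_H_eq_rmul rmul_add rmul_scale vs.scale_right_distrib mult.commute)

lemma zero_Troot [simp]: "0 \<in> T \<mu>"
  using subspace_Troot vs.subspace_0 by blast

lemma tp_Troot: "a \<in> T \<alpha> \<Longrightarrow> b \<in> T \<beta> \<Longrightarrow> c \<in> T \<gamma> \<Longrightarrow> tp a b c \<in> T (\<alpha> + \<beta> + \<gamma>)"
  unfolding Troot_def by (auto simp: snd_H_eq_rmul rmul_tp tp_scale vs.scale_left_distrib)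

lemma l0_of_pair_L0root:
  assumes a: "a \<in> T \<alpha>" and b: "b \<in> T \<beta>"
  shows "l0_of tp [(a, b)] \<in> L0root sc tp H (\<alpha> + \<beta>)"
  unfolding L0root_def
proof (intro CollectI conjI ballI)
  show "l0_of tp [(a, b)] \<in> L0 tp"
    unfolding L0_def by simp
  fix h assume h: "h \<in> H"
  define ps where "ps = (SOME ps. l0_of tp ps = h)"
  have "rmul ps a = sc (\<alpha> h) a" "rmul ps b = sc (\<beta> h) b"
    using a b h unfolding Troot_def ps_def by (auto simp: snd_H_eq_rmul)
  then show "l0_bracket tp (l0_of tp [(a, b)]) h = l0_scale sc ((\<alpha> + \<beta>) h) (l0_of tp [(a, b)])"
    unfolding l0_bracket_def fst_l0_of ps_def[symmetric]
    by (simp add: l0_of_bracket_list l0_of_pair_scale)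
qed

definition T0_generators :: "('v l0 \<Rightarrow> 'k) set \<Rightarrow> 'v set" where
  "T0_generators \<Lambda> = {tp x y z | x y z \<alpha> \<beta> \<gamma>. \<alpha> \<in> insert 0 \<Lambda> \<and> \<beta> \<in> insert 0 \<Lambda> \<and> \<gamma> \<in> insert 0 \<Lambda> \<and>
     \<alpha> + \<beta> + \<gamma> = 0 \<and> x \<in> T \<alpha> \<and> y \<in> T \<beta> \<and> z \<in> T \<gamma>}"

lemma T0_part_eq_span: "T0_part sc tp H \<Lambda> = vs.span (T0_generators \<Lambda>)"
proof -
  have "((\<lambda>h. \<alpha> h + \<beta> h + \<gamma> h) = (\<lambda>_. 0)) \<longleftrightarrow> \<alpha> + \<beta> + \<gamma> = 0" for \<alpha> \<beta> \<gamma> :: "'v l0 \<Rightarrow> 'k"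
    by (simp add: fun_eq_iff)
  then show ?thesis
    unfolding T0_part_def T0_generators_def zero_fun_def[symmetric] by simp
qed

lemma T0_part_subset_Troot_zero: "T0_part sc tp H \<Lambda> \<subseteq> T 0"
  unfolding T0_part_eq_span
proof (rule vs.span_minimal[OF _ subspace_Troot])
  show "T0_generators \<Lambda> \<subseteq> T 0"
    unfolding T0_generators_def using tp_Troot by fastforce
qed

lemma T_Lambda_eq_span: "T_Lambda sc tp H \<Lambda> = vs.span (T0_generators \<Lambda> \<union> (\<Union>\<gamma>\<in>\<Lambda>. T \<gamma>))"
  unfolding T_Lambda_def T0_part_eq_span V_part_def vs.span_Un ..

lemma Troot_subset_T_Lambda: "\<gamma> \<in> \<Lambda> \<Longrightarrow> T \<gamma> \<subseteq> T_Lambda sc tp H \<Lambda>"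
  unfolding T_Lambda_eq_span by (blast intro: vs.span_base)

end

locale symmetric_split_lts = lts_root_spaces sc tp H
  for sc :: "'k::field \<Rightarrow> 'v::ab_group_add \<Rightarrow> 'v" and tp and H +
  assumes split: "split_lts sc tp H"
    and symmetric_Lambda1: "symmetric_roots (Lambda1 sc H)"
    and symmetric_Lambda0: "symmetric_roots (Lambda0 sc tp H)"
begin

abbreviation \<Lambda>1 where "\<Lambda>1 \<equiv> Lambda1 sc H"
abbreviation \<Lambda>0 where "\<Lambda>0 \<equiv> Lambda0 sc tp H"
abbreviation weights where "weights \<equiv> insert 0 \<Lambda>1"

lemma uminus_Lambda1: "\<alpha> \<in> \<Lambda>1 \<Longrightarrow> - \<alpha> \<in> \<Lambda>1"
  using symmetric_Lambda1 unfolding symmetric_roots_def fun_Compl_def by blast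

lemma uminus_Lambda0: "\<alpha> \<in> \<Lambda>0 \<Longrightarrow> - \<alpha> \<in> \<Lambda>0"
  using symmetric_Lambda0 unfolding symmetric_roots_def fun_Compl_def by blast

lemma uminus_weights: "\<alpha> \<in> weights \<Longrightarrow> - \<alpha> \<in> weights"
  using uminus_Lambda1 by auto

lemma Lambda1_nonzero: "\<alpha> \<in> \<Lambda>1 \<Longrightarrow> \<alpha> \<noteq> 0"
  unfolding Lambda1_def zero_fun_def by auto

lemma Lambda0_nonzero: "\<alpha> \<in> \<Lambda>0 \<Longrightarrow> \<alpha> \<noteq> 0"
  unfolding Lambda0_def zero_fun_def by auto

lemma weights_dualH: "\<alpha> \<in> weights \<Longrightarrow> \<alpha> \<in> dualH sc H"
  unfolding Lambda1_def dualH_def by auto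

lemma add_dualH: "\<alpha> \<in> dualH sc H \<Longrightarrow> \<beta> \<in> dualH sc H \<Longrightarrow> \<alpha> + \<beta> \<in> dualH sc H"
  by (simp add: dualH_def distrib_left add_ac)

lemma weight_if_Troot_nonzero: "\<mu> \<in> dualH sc H \<Longrightarrow> x \<in> T \<mu> \<Longrightarrow> x \<noteq> 0 \<Longrightarrow> \<mu> \<in> weights"
  unfolding Lambda1_def zero_fun_def by auto

lemma Troot_nonzero: "\<alpha> \<in> \<Lambda>1 \<Longrightarrow> \<exists>t \<in> T \<alpha>. t \<noteq> 0"
  unfolding Lambda1_def by auto

lemma weight_tp:
  assumes "a \<in> T \<alpha>" "b \<in> T \<beta>" "c \<in> T \<gamma>" "\<alpha> \<in> weights" "\<beta> \<in> weights" "\<gamma> \<in> weights"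
    and "tp a b c \<noteq> 0"
  shows "\<alpha> + \<beta> + \<gamma> \<in> weights"
  using assms by (intro weight_if_Troot_nonzero[OF _ tp_Troot] add_dualH weights_dualH)

lemma l0_of_pair_nonzero: "tp a b c \<noteq> 0 \<Longrightarrow> l0_of tp [(a, b)] \<noteq> l0_zero"
  unfolding l0_zero_def l0_of_def by (auto simp: fun_eq_iff)

lemma tp_swap23_if_l0_of_zero: "l0_of tp [(b, c)] = l0_zero \<Longrightarrow> tp a b c = tp a c b"
  unfolding l0_zero_def l0_of_def by (auto simp: fun_eq_iff)

lemma Lambda0_if_l0_of_pair_nonzero:
  assumes "\<alpha> \<in> weights" "\<beta> \<in> weights" "a \<in> T \<alpha>" "b \<in> T \<beta>" "\<alpha> + \<beta> \<noteq> 0"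
    and "l0_of tp [(a, b)] \<noteq> l0_zero"
  shows "\<alpha> + \<beta> \<in> \<Lambda>0"
proof -
  have "L0root sc tp H (\<alpha> + \<beta>) \<noteq> {l0_zero}"
    using l0_of_pair_L0root[of a \<alpha> b \<beta>] assms by auto
  then show ?thesis
    using assms add_dualH weights_dualH unfolding Lambda0_def zero_fun_def by auto
qed

lemma tp_Troot_zero: "a \<in> T 0 \<Longrightarrow> b \<in> T 0 \<Longrightarrow> c \<in> T 0 \<Longrightarrow> tp a b c = 0"
  using split unfolding split_lts_def zero_fun_def by blast

lemma tp_Troot_opposite_zero:
  "\<alpha> \<in> \<Lambda>1 \<Longrightarrow> a \<in> T \<alpha> \<Longrightarrow> b \<in> T (- \<alpha>) \<Longrightarrow> c \<in> T 0 \<Longrightarrow> tp a b c = 0"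
  using split unfolding split_lts_def zero_fun_def fun_Compl_def by blast

lemma tp_Troot_cancel: "\<alpha> \<in> weights \<Longrightarrow> a \<in> T \<alpha> \<Longrightarrow> b \<in> T (- \<alpha>) \<Longrightarrow> c \<in> T 0 \<Longrightarrow> tp a b c = 0"
  using tp_Troot_zero tp_Troot_opposite_zero by (cases "\<alpha> = 0") auto

lemma Troot_sum_decomposition:
  "\<exists>S f. finite S \<and> S \<subseteq> weights \<and> (\<forall>\<alpha>\<in>S. f \<alpha> \<in> T \<alpha>) \<and> t = sum f S"
  using split unfolding split_lts_def zero_fun_def by (elim conjE allE)

lemma Troot_sum_independent:
  "finite S \<Longrightarrow> S \<subseteq> weights \<Longrightarrow> \<forall>\<alpha>\<in>S. f \<alpha> \<in> T \<alpha> \<Longrightarrow> sum f S = 0 \<Longrightarrow> \<alpha> \<in> S \<Longrightarrow> f \<alpha> = 0"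
  using split unfolding split_lts_def zero_fun_def by blast

lemma subspace_UNIV_if_Troots:
  assumes "vs.subspace U" and "\<And>\<alpha>. \<alpha> \<in> weights \<Longrightarrow> T \<alpha> \<subseteq> U"
  shows "U = UNIV"
proof -
  have "t \<in> U" for t
  proof -
    obtain S f where S: "S \<subseteq> weights" "\<forall>\<alpha>\<in>S. f \<alpha> \<in> T \<alpha>" and t: "t = sum f S"
      using Troot_sum_decomposition[of t] by blast
    have "f \<alpha> \<in> U" if "\<alpha> \<in> S" for \<alpha>
      using S assms(2) that by blast
    then show ?thesis
      unfolding t by (rule vs.subspace_sum[OF assms(1)])
  qed
  then show ?thesis by auto
qed

text \<open>\<open>reaches \<alpha> \<sigma>\<close>: \<open>\<sigma> = \<alpha>\<^sub>1 + \<dots> + \<alpha>\<^sub>2\<^sub>n\<^sub>+\<^sub>1\<close> for a family \<open>\<alpha>\<^sub>1 = \<alpha>, \<dots>, \<alpha>\<^sub>2\<^sub>n\<^sub>+\<^sub>1\<close>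
  satisfying the conditions on partial sums of a connection.\<close>
inductive reaches :: "('v l0 \<Rightarrow> 'k) \<Rightarrow> ('v l0 \<Rightarrow> 'k) \<Rightarrow> bool" where
  reaches_refl: "\<alpha> \<in> \<Lambda>1 \<Longrightarrow> reaches \<alpha> \<alpha>"
| reaches_step: "reaches \<alpha> \<sigma> \<Longrightarrow> \<beta> \<in> weights \<Longrightarrow> \<gamma> \<in> weights \<Longrightarrow> \<sigma> + \<beta> \<in> \<Lambda>0 \<Longrightarrow>
    \<sigma> + \<beta> + \<gamma> \<in> \<Lambda>1 \<Longrightarrow> reaches \<alpha> (\<sigma> + \<beta> + \<gamma>)"

lemma reaches_Lambda1: "reaches \<alpha> \<sigma> \<Longrightarrow> \<alpha> \<in> \<Lambda>1 \<and> \<sigma> \<in> \<Lambda>1"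
  by (induction rule: reaches.induct) blast+

lemma reaches_uminus: "reaches \<alpha> \<sigma> \<Longrightarrow> reaches (- \<alpha>) (- \<sigma>)"
proof (induction rule: reaches.induct)
  case (reaches_step \<alpha> \<sigma> \<beta> \<gamma>)
  have "- \<sigma> + - \<beta> \<in> \<Lambda>0" "- \<sigma> + - \<beta> + - \<gamma> \<in> \<Lambda>1"
    using uminus_Lambda0[OF reaches_step.hyps(4)] uminus_Lambda1[OF reaches_step.hyps(5)]
    by (simp_all only: minus_add_distrib)
  then show ?case
    unfolding minus_add_distrib
    by (intro reaches.reaches_step[OF reaches_step.IH] uminus_weights reaches_step.hyps)
qed (simp only: reaches_refl uminus_Lambda1)

lemma reaches_trans: "reaches \<sigma> \<tau> \<Longrightarrow> reaches \<alpha> \<sigma> \<Longrightarrow> reaches \<alpha> \<tau>"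
  by (induction rule: reaches.induct) (auto intro: reaches_step)

lemma reaches_sym: "reaches \<alpha> \<sigma> \<Longrightarrow> reaches \<sigma> \<alpha>"
proof (induction rule: reaches.induct)
  case (reaches_step \<alpha> \<sigma> \<beta> \<gamma>)
  have "reaches (\<sigma> + \<beta> + \<gamma>) (\<sigma> + \<beta> + \<gamma> + - \<gamma> + - \<beta>)"
  proof (rule reaches.reaches_step[OF reaches_refl])
    show "\<sigma> + \<beta> + \<gamma> + - \<gamma> \<in> \<Lambda>0" "\<sigma> + \<beta> + \<gamma> + - \<gamma> + - \<beta> \<in> \<Lambda>1"
      using reaches_step reaches_Lambda1 by (simp_all add: add.assoc)
  qed (use reaches_step uminus_weights in blast)+
  then have "reaches (\<sigma> + \<beta> + \<gamma>) \<sigma>"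
    by (simp add: add.assoc)
  then show ?case
    using reaches_step.IH reaches_trans by blast
qed (rule reaches_refl)

definition conn_family :: "('v l0 \<Rightarrow> 'k) \<Rightarrow> nat \<Rightarrow> (nat \<Rightarrow> 'v l0 \<Rightarrow> 'k) \<Rightarrow> bool" where
  "conn_family \<alpha> n a \<longleftrightarrow> (\<forall>i\<in>{1..2*n+1}. a i \<in> weights) \<and> (\<forall>k\<le>n. psum a (2*k+1) \<in> \<Lambda>1) \<and>
     (\<forall>k\<in>{1..n}. psum a (2*k) \<in> \<Lambda>0) \<and> a 1 = \<alpha>"

lemma connected_roots_conn_family:
  "connected_roots sc tp H \<alpha> \<beta> \<longleftrightarrow>
     (\<exists>n a. conn_family \<alpha> n a \<and> (psum a (2*n+1) = \<beta> \<or> psum a (2*n+1) = - \<beta>))"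
  unfolding connected_roots_def conn_family_def zero_fun_def fun_Compl_def conj_assoc ..

lemma conn_family_0: "conn_family \<alpha> 0 a \<longleftrightarrow> \<alpha> \<in> \<Lambda>1 \<and> a 1 = \<alpha>"
  by (auto simp: conn_family_def psum_def)

lemma conn_family_Suc:
  "conn_family \<alpha> (Suc n) a \<longleftrightarrow> conn_family \<alpha> n a \<and> a (2*n+2) \<in> weights \<and> a (2*n+3) \<in> weights \<and>
     psum a (2*n+2) \<in> \<Lambda>0 \<and> psum a (2*n+3) \<in> \<Lambda>1"
proof -
  have "{1..2*Suc n+1} = insert (2*n+3) (insert (2*n+2) {1..2*n+1})" "{1..Suc n} = insert (Suc n) {1..n}"
    by auto
  then show ?thesis
    unfolding conn_family_def by (auto simp: le_Suc_eq numeral_3_eq_3)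
qed

lemma conn_family_cong:
  "(\<And>i. 1 \<le> i \<Longrightarrow> i \<le> 2*n+1 \<Longrightarrow> a i = b i) \<Longrightarrow> conn_family \<alpha> n a \<longleftrightarrow> conn_family \<alpha> n b"
  unfolding conn_family_def by (auto cong: psum_cong)

lemma reaches_if_conn_family: "conn_family \<alpha> n a \<Longrightarrow> reaches \<alpha> (psum a (2*n+1))"
proof (induction n)
  case 0
  then show ?case
    by (simp add: conn_family_0 psum_def reaches_refl)
next
  case (Suc n)
  have "psum a (2*n+2) = psum a (2*n+1) + a (2*n+2)" "psum a (2*n+3) = psum a (2*n+2) + a (2*n+3)"
    using psum_Suc[of a "2*n+1"] psum_Suc[of a "2*n+2"] by (simp_all add: numeral_3_eq_3)
  moreover have "2 * Suc n + 1 = 2*n+3"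
    by simp
  ultimately show ?case
    using Suc reaches_step[of \<alpha> "psum a (2*n+1)" "a (2*n+2)" "a (2*n+3)"]
    by (simp only: conn_family_Suc)
qed

lemma conn_family_if_reaches: "reaches \<alpha> \<sigma> \<Longrightarrow> \<exists>n a. conn_family \<alpha> n a \<and> psum a (2*n+1) = \<sigma>"
proof (induction rule: reaches.induct)
  case (reaches_refl \<alpha>)
  show ?case
    using reaches_refl by (intro exI[of _ 0] exI[of _ "\<lambda>_. \<alpha>"]) (simp add: conn_family_0 psum_def)
next
  case (reaches_step \<alpha> \<sigma> \<beta> \<gamma>)
  then obtain n a where a: "conn_family \<alpha> n a" "psum a (2*n+1) = \<sigma>"
    by blast
  define a' where "a' = a(2*n+2 := \<beta>, 2*n+3 := \<gamma>)"
  have "conn_family \<alpha> n a'" "psum a' (2*n+1) = \<sigma>"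
    using a conn_family_cong[of n a a'] psum_cong[of "2*n+1" a a'] by (simp_all add: a'_def)
  moreover have "psum a' (2*n+2) = \<sigma> + \<beta>" "psum a' (2*n+3) = \<sigma> + \<beta> + \<gamma>"
    using calculation(2) psum_Suc[of a' "2*n+1"] psum_Suc[of a' "2*n+2"]
    by (simp_all add: a'_def numeral_3_eq_3)
  ultimately have "conn_family \<alpha> (Suc n) a'" "psum a' (2 * Suc n + 1) = \<sigma> + \<beta> + \<gamma>"
    using reaches_step.hyps by (simp_all add: conn_family_Suc a'_def numeral_3_eq_3)
  then show ?case
    by blast
qed

abbreviation connected where
  "connected \<equiv> connected_roots sc tp H"

lemma connected_iff_reaches: "connected \<alpha> \<beta> \<longleftrightarrow> reaches \<alpha> \<beta> \<or> reaches \<alpha> (- \<beta>)"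
  unfolding connected_roots_conn_family
  using reaches_if_conn_family conn_family_if_reaches by metis

lemma connected_Lambda1: "connected \<alpha> \<beta> \<Longrightarrow> \<alpha> \<in> \<Lambda>1 \<and> \<beta> \<in> \<Lambda>1"
  unfolding connected_iff_reaches using reaches_Lambda1 uminus_Lambda1 by force

lemma connected_refl: "\<alpha> \<in> \<Lambda>1 \<Longrightarrow> connected \<alpha> \<alpha>"
  unfolding connected_iff_reaches by (simp add: reaches_refl)

lemma connected_uminus_right [simp]: "connected \<alpha> (- \<beta>) \<longleftrightarrow> connected \<alpha> \<beta>"
  unfolding connected_iff_reaches by auto

lemma connected_sym: "connected \<alpha> \<beta> \<Longrightarrow> connected \<beta> \<alpha>"
  unfolding connected_iff_reaches using reaches_sym reaches_uminus by fastforce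

lemma connected_uminus_left [simp]: "connected (- \<alpha>) \<beta> \<longleftrightarrow> connected \<alpha> \<beta>"
  using connected_sym connected_uminus_right by metis

lemma connected_trans: "connected \<alpha> \<beta> \<Longrightarrow> connected \<beta> \<gamma> \<Longrightarrow> connected \<alpha> \<gamma>"
  unfolding connected_iff_reaches using reaches_trans reaches_uminus by fastforce

lemma connected_step:
  "\<mu> \<in> weights \<Longrightarrow> \<mu> \<noteq> 0 \<Longrightarrow> \<nu> \<in> weights \<Longrightarrow> \<rho> \<in> weights \<Longrightarrow> \<mu> + \<nu> \<in> \<Lambda>0 \<Longrightarrow>
    \<mu> + \<nu> + \<rho> \<in> \<Lambda>1 \<Longrightarrow> connected \<mu> (\<mu> + \<nu> + \<rho>)"
  unfolding connected_iff_reaches by (blast intro: reaches_step reaches_refl)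

lemma connected_step_or_opposite:
  assumes "\<xi> \<in> weights" "\<nu> \<in> weights" "\<rho> \<in> weights" "\<nu> \<noteq> 0"
    and "\<xi> + \<nu> \<in> insert 0 \<Lambda>0" "\<xi> + \<nu> + \<rho> \<in> \<Lambda>1"
    and "\<xi> \<noteq> 0 \<Longrightarrow> connected \<xi> (\<xi> + \<nu> + \<rho>)"
  shows "connected \<nu> (\<xi> + \<nu> + \<rho>)"
proof (cases "\<xi> + \<nu> = 0")
  case True
  then have "\<nu> = - \<xi>"
    by (simp only: add_eq_0_iff)
  moreover have "\<xi> \<noteq> 0"
    using assms(4) True by auto
  ultimately show ?thesis
    using assms(7) by simp
next
  case False
  then show ?thesis
    using assms connected_step[of \<nu> \<xi> \<rho>] by (simp add: add.commute)
qed

lemma connected_to_sum_of_weights: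
  assumes w: "\<alpha>1 \<in> weights" "\<alpha>2 \<in> weights" "\<alpha>3 \<in> weights"
    and s: "\<alpha>1 + \<alpha>2 \<in> \<Lambda>0" and \<delta>: "\<alpha>1 + \<alpha>2 + \<alpha>3 \<in> \<Lambda>1"
    and pair3: "\<alpha>1 + \<alpha>3 \<in> insert 0 \<Lambda>0 \<or> \<alpha>2 + \<alpha>3 \<in> insert 0 \<Lambda>0"
  shows "\<forall>\<mu>\<in>{\<alpha>1, \<alpha>2, \<alpha>3, \<alpha>1 + \<alpha>2 + \<alpha>3}. \<mu> \<noteq> 0 \<longrightarrow> connected \<mu> (\<alpha>1 + \<alpha>2 + \<alpha>3)"
proof -
  have c1: "\<alpha>1 \<noteq> 0 \<Longrightarrow> connected \<alpha>1 (\<alpha>1 + \<alpha>2 + \<alpha>3)"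
    using s \<delta> w by (intro connected_step) auto
  have c2: "\<alpha>2 \<noteq> 0 \<Longrightarrow> connected \<alpha>2 (\<alpha>1 + \<alpha>2 + \<alpha>3)"
    using s \<delta> w connected_step[of \<alpha>2 \<alpha>1 \<alpha>3] by (simp add: add.commute)
  have "\<alpha>3 \<noteq> 0 \<Longrightarrow> connected \<alpha>3 (\<alpha>1 + \<alpha>2 + \<alpha>3)"
    using pair3 \<delta> w c1 c2
      connected_step_or_opposite[of \<alpha>1 \<alpha>3 \<alpha>2] connected_step_or_opposite[of \<alpha>2 \<alpha>3 \<alpha>1]
    by (auto simp: ac_simps)
  then show ?thesis
    using \<delta> c1 c2 connected_refl by blast
qed

lemma connected_to_opposite_weight:
  assumes w: "\<alpha>1 \<in> weights" "\<alpha>2 \<in> weights" "\<alpha>3 \<in> weights"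
    and s: "\<alpha>1 + \<alpha>2 \<in> \<Lambda>0" and \<delta>: "\<alpha>1 + \<alpha>2 + \<alpha>3 = 0"
  shows "\<alpha>1 + \<alpha>2 \<in> \<Lambda>1 \<and> (\<forall>\<mu>\<in>{\<alpha>1, \<alpha>2, \<alpha>3, \<alpha>1 + \<alpha>2 + \<alpha>3}. \<mu> \<noteq> 0 \<longrightarrow> connected \<mu> (\<alpha>1 + \<alpha>2))"
proof -
  have \<alpha>3: "\<alpha>3 = - (\<alpha>1 + \<alpha>2)"
    using \<delta> by (simp only: add_eq_0_iff)
  then have "\<alpha>3 \<in> \<Lambda>1"
    using w(3) Lambda0_nonzero[OF s] by auto
  then have "- \<alpha>3 \<in> \<Lambda>1"
    by (rule uminus_Lambda1)
  then have s1: "\<alpha>1 + \<alpha>2 \<in> \<Lambda>1"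
    unfolding \<alpha>3 minus_minus .
  have "\<alpha>1 \<noteq> 0 \<Longrightarrow> connected \<alpha>1 (\<alpha>1 + \<alpha>2)" "\<alpha>2 \<noteq> 0 \<Longrightarrow> connected \<alpha>2 (\<alpha>1 + \<alpha>2)"
    using s s1 w connected_step[of \<alpha>1 \<alpha>2 0] connected_step[of \<alpha>2 \<alpha>1 0]
    by (simp_all add: add.commute)
  moreover have "connected \<alpha>3 (\<alpha>1 + \<alpha>2)"
    unfolding \<alpha>3 connected_uminus_left by (rule connected_refl[OF s1])
  ultimately show ?thesis
    using s1 \<delta> by auto
qed

lemma connected_to_third_weight:
  assumes w: "\<alpha>1 \<in> weights" "\<alpha>2 \<in> weights" and \<alpha>3: "\<alpha>3 \<in> \<Lambda>1"
    and s: "\<alpha>1 + \<alpha>2 = 0"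
    and pair3: "\<alpha>1 + \<alpha>3 \<in> insert 0 \<Lambda>0 \<or> \<alpha>2 + \<alpha>3 \<in> insert 0 \<Lambda>0"
  shows "\<forall>\<mu>\<in>{\<alpha>1, \<alpha>2, \<alpha>3, \<alpha>1 + \<alpha>2 + \<alpha>3}. \<mu> \<noteq> 0 \<longrightarrow> connected \<mu> \<alpha>3"
proof -
  have \<alpha>2: "\<alpha>2 = - \<alpha>1"
    using s by (simp only: add_eq_0_iff)
  have "\<alpha>1 \<noteq> 0 \<Longrightarrow> connected \<alpha>1 \<alpha>3"
    using pair3 \<alpha>2 \<alpha>3 w connected_refl
      connected_step_or_opposite[of \<alpha>3 \<alpha>1 \<alpha>2] connected_step_or_opposite[of \<alpha>3 \<alpha>2 \<alpha>1]
    by (auto simp: ac_simps)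
  then show ?thesis
    using \<alpha>2 \<alpha>3 s connected_refl by auto
qed

lemma weight_pair_sums_of_tp:
  assumes a: "a \<in> T \<alpha>1" and b: "b \<in> T \<alpha>2" and c: "c \<in> T \<alpha>3"
    and w: "\<alpha>1 \<in> weights" "\<alpha>2 \<in> weights" "\<alpha>3 \<in> weights" and nz: "tp a b c \<noteq> 0"
  shows "\<alpha>1 + \<alpha>2 \<in> insert 0 \<Lambda>0" and "\<alpha>1 + \<alpha>3 \<in> insert 0 \<Lambda>0 \<or> \<alpha>2 + \<alpha>3 \<in> insert 0 \<Lambda>0"
proof -
  have sum: "\<alpha> + \<beta> \<in> insert 0 \<Lambda>0"
    if "x \<in> T \<alpha>" "y \<in> T \<beta>" "\<alpha> \<in> weights" "\<beta> \<in> weights" "l0_of tp [(x, y)] \<noteq> l0_zero" for x y \<alpha> \<beta>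
    using Lambda0_if_l0_of_pair_nonzero that by blast
  show "\<alpha>1 + \<alpha>2 \<in> insert 0 \<Lambda>0"
    using sum[OF a b w(1,2) l0_of_pair_nonzero[OF nz]] .
  have "l0_of tp [(a, c)] \<noteq> l0_zero \<or> l0_of tp [(b, c)] \<noteq> l0_zero"
    using nz tp_swap23_if_l0_of_zero[of b c a] l0_of_pair_nonzero[of a c b] by auto
  then show "\<alpha>1 + \<alpha>3 \<in> insert 0 \<Lambda>0 \<or> \<alpha>2 + \<alpha>3 \<in> insert 0 \<Lambda>0"
    using sum[OF a c w(1,3)] sum[OF b c w(2,3)] by blast
qed

lemma connected_roots_of_tp:
  assumes a: "a \<in> T \<alpha>1" and b: "b \<in> T \<alpha>2" and c: "c \<in> T \<alpha>3"
    and w: "\<alpha>1 \<in> weights" "\<alpha>2 \<in> weights" "\<alpha>3 \<in> weights" and nz: "tp a b c \<noteq> 0"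
  shows "\<exists>\<rho>\<in>\<Lambda>1. \<forall>\<mu>\<in>{\<alpha>1, \<alpha>2, \<alpha>3, \<alpha>1 + \<alpha>2 + \<alpha>3}. \<mu> \<noteq> 0 \<longrightarrow> connected \<mu> \<rho>"
proof -
  note pair_sums = weight_pair_sums_of_tp[OF a b c w nz]
  have \<delta>: "\<alpha>1 + \<alpha>2 + \<alpha>3 \<in> weights"
    using weight_tp[OF a b c w nz] .
  consider "\<alpha>1 + \<alpha>2 \<in> \<Lambda>0" "\<alpha>1 + \<alpha>2 + \<alpha>3 \<noteq> 0" | "\<alpha>1 + \<alpha>2 \<in> \<Lambda>0" "\<alpha>1 + \<alpha>2 + \<alpha>3 = 0"
    | "\<alpha>1 + \<alpha>2 = 0"
    using pair_sums(1) by blast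
  then show ?thesis
  proof cases
    case 1
    then show ?thesis
      using connected_to_sum_of_weights[OF w _ _ pair_sums(2)] \<delta> by blast
  next
    case 2
    then show ?thesis
      using connected_to_opposite_weight[OF w] by blast
  next
    case 3
    then have "\<alpha>3 \<noteq> 0"
      using nz a b c w(1) tp_Troot_cancel by (auto simp: add_eq_0_iff)
    then show ?thesis
      using connected_to_third_weight[OF w(1,2) _ 3 pair_sums(2)] w(3) by blast
  qed
qed

abbreviation C where
  "C \<alpha>0 \<equiv> conn_class sc tp H \<alpha>0"

lemma conn_class_Lambda1: "C \<alpha>0 \<subseteq> \<Lambda>1"
  unfolding conn_class_def by auto

lemma conn_class_self: "\<alpha>0 \<in> \<Lambda>1 \<Longrightarrow> \<alpha>0 \<in> C \<alpha>0"
  unfolding conn_class_def by (simp add: connected_refl)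

lemma uminus_conn_class: "\<beta> \<in> C \<alpha>0 \<Longrightarrow> - \<beta> \<in> C \<alpha>0"
  unfolding conn_class_def by (simp add: uminus_Lambda1)

lemma weights_of_tp_in_conn_class:
  assumes a: "a \<in> T \<alpha>1" and b: "b \<in> T \<alpha>2" and c: "c \<in> T \<alpha>3"
    and w: "\<alpha>1 \<in> weights" "\<alpha>2 \<in> weights" "\<alpha>3 \<in> weights" and nz: "tp a b c \<noteq> 0"
    and meets: "{\<alpha>1, \<alpha>2, \<alpha>3, \<alpha>1 + \<alpha>2 + \<alpha>3} \<inter> C \<alpha>0 \<noteq> {}"
  shows "{\<alpha>1, \<alpha>2, \<alpha>3, \<alpha>1 + \<alpha>2 + \<alpha>3} \<subseteq> insert 0 (C \<alpha>0)"
proof -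
  obtain \<rho> where \<rho>: "\<forall>\<mu>\<in>{\<alpha>1, \<alpha>2, \<alpha>3, \<alpha>1 + \<alpha>2 + \<alpha>3}. \<mu> \<noteq> 0 \<longrightarrow> connected \<mu> \<rho>"
    using connected_roots_of_tp[OF a b c w nz] by blast
  obtain \<mu>0 where \<mu>0: "\<mu>0 \<in> {\<alpha>1, \<alpha>2, \<alpha>3, \<alpha>1 + \<alpha>2 + \<alpha>3}" "\<mu>0 \<in> C \<alpha>0"
    using meets by blast
  then have "connected \<alpha>0 \<rho>"
    using \<rho> Lambda1_nonzero connected_trans unfolding conn_class_def by blast
  then have "\<mu> \<in> C \<alpha>0" if "\<mu> \<in> {\<alpha>1, \<alpha>2, \<alpha>3, \<alpha>1 + \<alpha>2 + \<alpha>3}" "\<mu> \<noteq> 0" for \<mu>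
    using \<rho> that connected_sym connected_trans connected_Lambda1 unfolding conn_class_def by blast
  then show ?thesis
    by blast
qed

lemma tp_eq_zero_if_weights_across_conn_class:
  assumes "a \<in> T \<alpha>1" "b \<in> T \<alpha>2" "c \<in> T \<alpha>3" "\<alpha>1 \<in> weights" "\<alpha>2 \<in> weights" "\<alpha>3 \<in> weights"
    and "{\<alpha>1, \<alpha>2, \<alpha>3} \<inter> C \<alpha>0 \<noteq> {}" "\<not> {\<alpha>1, \<alpha>2, \<alpha>3} \<subseteq> insert 0 (C \<alpha>0)"
  shows "tp a b c = 0"
  using weights_of_tp_in_conn_class[OF assms(1-6), of \<alpha>0] assms(7,8) by blast

lemma lts_ideal_span_if_root_products:
  assumes "\<And>x y z \<beta> \<gamma>. x \<in> G \<Longrightarrow> y \<in> T \<beta> \<Longrightarrow> z \<in> T \<gamma> \<Longrightarrow> \<beta> \<in> weights \<Longrightarrow> \<gamma> \<in> weights \<Longrightarrow>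
      tp x y z \<in> vs.span G \<and> tp y x z \<in> vs.span G \<and> tp y z x \<in> vs.span G"
  shows "lts_ideal sc tp (vs.span G)"
proof -
  define P where "P x y z \<longleftrightarrow> tp x y z \<in> vs.span G \<and> tp y x z \<in> vs.span G \<and> tp y z x \<in> vs.span G"
    for x y z
  have subspace_P: "vs.subspace {x. P x y z}" "vs.subspace {y. P x y z}" "vs.subspace {z. P x y z}" for x y z
    unfolding P_def Collect_conj_eq by (intro vs.subspace_inter subspace_tp_preimage vs.subspace_span)+
  have "{y. P x y z} = UNIV" if "x \<in> G" "z \<in> T \<gamma>" "\<gamma> \<in> weights" for x z \<gamma>
    using assms that by (intro subspace_UNIV_if_Troots[OF subspace_P(2)]) (auto simp: P_def)
  then have "{z. P x y z} = UNIV" if "x \<in> G" for x y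
    using that by (intro subspace_UNIV_if_Troots[OF subspace_P(3)]) blast
  then have "vs.span G \<subseteq> {x. P x y z}" for y z
    by (intro vs.span_minimal[OF _ subspace_P(1)]) blast
  then show ?thesis
    unfolding lts_ideal_def P_def using vs.subspace_span by blast
qed

lemma tp_in_T_Lambda_if_weights_in_conn_class:
  assumes a: "a \<in> T \<alpha>1" and b: "b \<in> T \<alpha>2" and c: "c \<in> T \<alpha>3"
    and K: "\<alpha>1 \<in> insert 0 (C \<alpha>0)" "\<alpha>2 \<in> insert 0 (C \<alpha>0)" "\<alpha>3 \<in> insert 0 (C \<alpha>0)"
  shows "tp a b c \<in> T_Lambda sc tp H (C \<alpha>0)"
proof -
  have w: "\<alpha>1 \<in> weights" "\<alpha>2 \<in> weights" "\<alpha>3 \<in> weights"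
    using K conn_class_Lambda1 by auto
  consider "\<alpha>1 + \<alpha>2 + \<alpha>3 = 0" | "tp a b c = 0" | "\<alpha>1 + \<alpha>2 + \<alpha>3 \<in> C \<alpha>0"
  proof (cases "\<alpha>1 + \<alpha>2 + \<alpha>3 = 0 \<or> tp a b c = 0")
    case False
    then have "{\<alpha>1, \<alpha>2, \<alpha>3, \<alpha>1 + \<alpha>2 + \<alpha>3} \<inter> C \<alpha>0 \<noteq> {}"
      using K by auto
    then show thesis
      using that weights_of_tp_in_conn_class[OF a b c w] False by blast
  qed blast+
  then show ?thesis
  proof cases
    case 1
    then have "tp a b c \<in> T0_generators (C \<alpha>0)"
      unfolding T0_generators_def using a b c K by blast
    then show ?thesis
      unfolding T_Lambda_eq_span by (blast intro: vs.span_base)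
  next
    case 3
    then show ?thesis
      unfolding T_Lambda_eq_span using tp_Troot[OF a b c] by (blast intro: vs.span_base)
  qed (simp add: T_Lambda_eq_span vs.span_zero)
qed

lemma tp_in_T_Lambda_if_weight_in_conn_class:
  assumes "a \<in> T \<alpha>1" "b \<in> T \<alpha>2" "c \<in> T \<alpha>3" "\<alpha>1 \<in> weights" "\<alpha>2 \<in> weights" "\<alpha>3 \<in> weights"
    and "{\<alpha>1, \<alpha>2, \<alpha>3} \<inter> C \<alpha>0 \<noteq> {}"
  shows "tp a b c \<in> T_Lambda sc tp H (C \<alpha>0)"
proof (cases "tp a b c = 0")
  case True
  then show ?thesis
    unfolding T_Lambda_eq_span by (simp add: vs.span_zero)
next
  case False
  then show ?thesis
    using weights_of_tp_in_conn_class[OF assms(1-6) False, of \<alpha>0] assms(7)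
    by (intro tp_in_T_Lambda_if_weights_in_conn_class[OF assms(1-3)]) auto
qed

lemma tp_pair_outside_conn_class:
  assumes a: "a \<in> T \<alpha>1" and b: "b \<in> T \<alpha>2" and w: "\<alpha>1 \<in> weights" "\<alpha>2 \<in> weights"
    and meets: "{\<alpha>1, \<alpha>2} \<inter> C \<alpha>0 \<noteq> {}"
    and x: "x \<in> T \<theta>" and \<theta>: "\<theta> \<in> weights - C \<alpha>0" and p: "p \<in> {tp a b x, tp x a b, tp x b a}"
  shows "p \<in> T (\<alpha>1 + \<alpha>2) \<and> (\<theta> \<noteq> 0 \<longrightarrow> p = 0)"
proof (cases "\<theta> = 0")
  case True
  then show ?thesis
    using p tp_Troot[OF a b x] tp_Troot[OF x a b] tp_Troot[OF x b a] by (auto simp: ac_simps)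
next
  case False
  then show ?thesis
    using p meets w \<theta> tp_eq_zero_if_weights_across_conn_class[OF a b x, of \<alpha>0]
      tp_eq_zero_if_weights_across_conn_class[OF x a b, of \<alpha>0]
      tp_eq_zero_if_weights_across_conn_class[OF x b a, of \<alpha>0]
    by auto
qed

text \<open>Expanded by the Leibniz identities, every term of these products contains a vanishing product.\<close>
lemma tp_T0_generator_outside_conn_class:
  assumes a: "a \<in> T \<alpha>1" and b: "b \<in> T \<alpha>2" and c: "c \<in> T \<alpha>3"
    and K: "\<alpha>1 \<in> insert 0 (C \<alpha>0)" "\<alpha>2 \<in> insert 0 (C \<alpha>0)" "\<alpha>3 \<in> insert 0 (C \<alpha>0)"
    and sum: "\<alpha>1 + \<alpha>2 + \<alpha>3 = 0"
    and y: "y \<in> T \<beta>" and z: "z \<in> T \<gamma>" and out: "\<beta> \<in> weights - C \<alpha>0" "\<gamma> \<in> weights - C \<alpha>0"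
    and nz: "\<beta> \<noteq> 0 \<or> \<gamma> \<noteq> 0"
  shows "tp (tp a b c) y z = 0 \<and> tp y (tp a b c) z = 0 \<and> tp y z (tp a b c) = 0"
proof (cases "tp a b c = 0")
  case False
  have w: "\<alpha>1 \<in> weights" "\<alpha>2 \<in> weights" "\<alpha>3 \<in> weights"
    using K conn_class_Lambda1 by auto
  have \<alpha>12: "\<alpha>1 + \<alpha>2 = - \<alpha>3"
    using sum by (simp only: eq_neg_iff_add_eq_0)
  have \<alpha>3: "\<alpha>3 \<in> C \<alpha>0"
  proof (rule ccontr)
    assume "\<alpha>3 \<notin> C \<alpha>0"
    then have "\<alpha>3 = 0" "\<alpha>2 = - \<alpha>1"
      using K(3) \<alpha>12 by (auto simp: add_eq_0_iff)
    then have "b \<in> T (- \<alpha>1)" "c \<in> T 0"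
      using b c by simp_all
    then show False
      using False tp_Troot_cancel[OF w(1) a] by blast
  qed
  have meets: "{\<alpha>1, \<alpha>2} \<inter> C \<alpha>0 \<noteq> {}"
    using K \<alpha>12 \<alpha>3 conn_class_Lambda1 Lambda1_nonzero by fastforce
  have outer: "tp p c x = 0 \<and> tp p x c = 0 \<and> tp x c p = 0 \<and> tp x p c = 0"
    if "x \<in> T \<theta>" "x' \<in> T \<theta>'" "\<theta> \<in> weights - C \<alpha>0" "\<theta>' \<in> weights - C \<alpha>0" "\<theta> \<noteq> 0 \<or> \<theta>' \<noteq> 0"
      "p \<in> {tp a b x', tp x' a b, tp x' b a}" for x x' p \<theta> \<theta>'
  proof -
    have p: "p \<in> T (- \<alpha>3)" "\<theta>' \<noteq> 0 \<Longrightarrow> p = 0"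
      using tp_pair_outside_conn_class[OF a b w(1,2) meets that(2,4,6)] \<alpha>12 by auto
    have "- \<alpha>3 \<in> weights" "{- \<alpha>3, \<alpha>3, \<theta>} \<inter> C \<alpha>0 \<noteq> {}"
      using \<alpha>3 uminus_conn_class conn_class_Lambda1 by auto
    then show ?thesis
      using p that(1,3,5) w(3) tp_eq_zero_if_weights_across_conn_class[OF p(1) c that(1), of \<alpha>0]
        tp_eq_zero_if_weights_across_conn_class[OF p(1) that(1) c, of \<alpha>0]
        tp_eq_zero_if_weights_across_conn_class[OF that(1) c p(1), of \<alpha>0]
        tp_eq_zero_if_weights_across_conn_class[OF that(1) p(1) c, of \<alpha>0]
      by (cases "\<theta>' = 0") (auto simp: insert_commute)
  qed
  have "tp c y z = 0" "tp y c z = 0" "tp y z c = 0"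
    using \<alpha>3 w(3) out nz tp_eq_zero_if_weights_across_conn_class[OF c y z, of \<alpha>0]
      tp_eq_zero_if_weights_across_conn_class[OF y c z, of \<alpha>0]
      tp_eq_zero_if_weights_across_conn_class[OF y z c, of \<alpha>0]
    by auto
  then show ?thesis
    using outer[OF z y out(2,1)] outer[OF y z out] nz
    unfolding tp_tp_expand1[of a b c y z] tp_tp_expand2[of y a b c z] tp_tp_expand3[of y z a b c]
    by auto
qed simp

lemma tp_T0_generator_in_T_Lambda:
  assumes x: "x \<in> T0_generators (C \<alpha>0)" and y: "y \<in> T \<beta>" and z: "z \<in> T \<gamma>"
    and w: "\<beta> \<in> weights" "\<gamma> \<in> weights"
  shows "tp x y z \<in> T_Lambda sc tp H (C \<alpha>0) \<and> tp y x z \<in> T_Lambda sc tp H (C \<alpha>0) \<and>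
    tp y z x \<in> T_Lambda sc tp H (C \<alpha>0)"
proof -
  obtain a b c \<alpha>1 \<alpha>2 \<alpha>3 where x_eq: "x = tp a b c"
    and abc: "a \<in> T \<alpha>1" "b \<in> T \<alpha>2" "c \<in> T \<alpha>3"
    and K: "\<alpha>1 \<in> insert 0 (C \<alpha>0)" "\<alpha>2 \<in> insert 0 (C \<alpha>0)" "\<alpha>3 \<in> insert 0 (C \<alpha>0)"
    and sum: "\<alpha>1 + \<alpha>2 + \<alpha>3 = 0"
    using x unfolding T0_generators_def by blast
  have x0: "x \<in> T 0"
    using tp_Troot[OF abc] x_eq sum by simp
  have zero: "0 \<in> T_Lambda sc tp H (C \<alpha>0)"
    unfolding T_Lambda_eq_span by (rule vs.span_zero)
  consider "\<beta> \<in> insert 0 (C \<alpha>0)" "\<gamma> \<in> insert 0 (C \<alpha>0)"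
    | "\<beta> \<in> C \<alpha>0 \<or> \<gamma> \<in> C \<alpha>0" "\<not> {\<beta>, \<gamma>} \<subseteq> insert 0 (C \<alpha>0)"
    | "\<beta> \<in> weights - C \<alpha>0" "\<gamma> \<in> weights - C \<alpha>0" "\<beta> \<noteq> 0 \<or> \<gamma> \<noteq> 0"
    using w by blast
  then show ?thesis
  proof cases
    case 1
    then show ?thesis
      using tp_in_T_Lambda_if_weights_in_conn_class x0 y z by blast
  next
    case 2
    then have "{0, \<beta>, \<gamma>} \<inter> C \<alpha>0 \<noteq> {}" "\<not> {0, \<beta>, \<gamma>} \<subseteq> insert 0 (C \<alpha>0)"
      by auto
    moreover have "{\<beta>, 0, \<gamma>} = {0, \<beta>, \<gamma>}" "{\<beta>, \<gamma>, 0} = {0, \<beta>, \<gamma>}"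
      by auto
    ultimately have "tp x y z = 0" "tp y x z = 0" "tp y z x = 0"
      using w tp_eq_zero_if_weights_across_conn_class[OF x0 y z, of \<alpha>0]
        tp_eq_zero_if_weights_across_conn_class[OF y x0 z, of \<alpha>0]
        tp_eq_zero_if_weights_across_conn_class[OF y z x0, of \<alpha>0]
      by simp_all
    then show ?thesis
      using zero by simp
  next
    case 3
    then show ?thesis
      using zero tp_T0_generator_outside_conn_class[OF abc K sum y z] x_eq by simp
  qed
qed

lemma lts_ideal_T_Lambda_conn_class: "lts_ideal sc tp (T_Lambda sc tp H (C \<alpha>0))"
  unfolding T_Lambda_eq_span
proof (rule lts_ideal_span_if_root_products, unfold T_Lambda_eq_span[symmetric])
  fix x y z \<beta> \<gamma>
  assume x: "x \<in> T0_generators (C \<alpha>0) \<union> (\<Union>\<gamma>\<in>C \<alpha>0. T \<gamma>)"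
    and y: "y \<in> T \<beta>" and z: "z \<in> T \<gamma>" and w: "\<beta> \<in> weights" "\<gamma> \<in> weights"
  show "tp x y z \<in> T_Lambda sc tp H (C \<alpha>0) \<and> tp y x z \<in> T_Lambda sc tp H (C \<alpha>0) \<and>
    tp y z x \<in> T_Lambda sc tp H (C \<alpha>0)"
  proof (cases "x \<in> T0_generators (C \<alpha>0)")
    case True
    then show ?thesis
      using tp_T0_generator_in_T_Lambda[OF _ y z w] by blast
  next
    case False
    then obtain \<kappa> where "x \<in> T \<kappa>" "\<kappa> \<in> C \<alpha>0"
      using x by blast
    moreover have "\<kappa> \<in> weights"
      using \<open>\<kappa> \<in> C \<alpha>0\<close> conn_class_Lambda1 by auto
    ultimately show ?thesis
      using y z w tp_in_T_Lambda_if_weight_in_conn_class by auto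
  qed
qed

lemma mem_if_Troot_in_T_Lambda:
  assumes \<Lambda>: "\<Lambda> \<subseteq> \<Lambda>1" and \<beta>: "\<beta> \<in> \<Lambda>1" and t: "t \<in> T \<beta>" "t \<noteq> 0" "t \<in> T_Lambda sc tp H \<Lambda>"
  shows "\<beta> \<in> \<Lambda>"
proof (rule ccontr)
  assume "\<beta> \<notin> \<Lambda>"
  obtain x v where tv: "t = x + v" "x \<in> T0_part sc tp H \<Lambda>" "v \<in> V_part sc H \<Lambda>"
    using t(3) unfolding T_Lambda_def by blast
  obtain S g where S: "finite S" "S \<subseteq> \<Lambda>" "\<forall>\<kappa>\<in>S. g \<kappa> \<in> T \<kappa>" "v = sum g S"
    using vs.in_span_UN_subspaces_sum[OF tv(3)[unfolded V_part_def] subspace_Troot] by blast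
  have \<beta>0: "\<beta> \<noteq> 0" and "0 \<notin> S" "\<beta> \<notin> S"
    using \<beta> S(2) \<Lambda> \<open>\<beta> \<notin> \<Lambda>\<close> Lambda1_nonzero by blast+
  define f where "f = g(0 := x, \<beta> := - t)"
  have "sum f (insert 0 (insert \<beta> S)) = x + (- t + sum g S)"
    using S(1) \<open>0 \<notin> S\<close> \<open>\<beta> \<notin> S\<close> \<beta>0 by (auto simp: f_def intro!: sum.cong)
  also have "\<dots> = 0"
    using tv(1) S(4) by simp
  finally have sum0: "sum f (insert 0 (insert \<beta> S)) = 0" .
  have "x \<in> T 0"
    using tv(2) T0_part_subset_Troot_zero by blast
  then have "\<forall>\<kappa>\<in>insert 0 (insert \<beta> S). f \<kappa> \<in> T \<kappa>"
    using S(3) t(1) \<beta>0 \<open>0 \<notin> S\<close> \<open>\<beta> \<notin> S\<close> by (auto simp: f_def vs.subspace_neg[OF subspace_Troot])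
  moreover have "insert 0 (insert \<beta> S) \<subseteq> weights"
    using S(2) \<Lambda> \<beta> by auto
  ultimately have "f \<beta> = 0"
    using Troot_sum_independent[OF _ _ _ sum0] S(1) by blast
  then show False
    using t(2) \<beta>0 by (simp add: f_def)
qed

lemma all_connected_if_simple:
  assumes simple: "lts_simple sc tp" and \<alpha>: "\<alpha> \<in> \<Lambda>1" and \<beta>: "\<beta> \<in> \<Lambda>1"
  shows "connected \<alpha> \<beta>"
proof -
  obtain t\<alpha> t\<beta> where t: "t\<alpha> \<in> T \<alpha>" "t\<alpha> \<noteq> 0" "t\<beta> \<in> T \<beta>" "t\<beta> \<noteq> 0"
    using Troot_nonzero \<alpha> \<beta> by blast
  have own: "t\<alpha> \<in> T_Lambda sc tp H (C \<alpha>)" "t\<beta> \<in> T_Lambda sc tp H (C \<beta>)"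
    using t Troot_subset_T_Lambda conn_class_self \<alpha> \<beta> by blast+
  then have J_or_UNIV: "T_Lambda sc tp H (C \<gamma>) = lts_J sc tp \<or> T_Lambda sc tp H (C \<gamma>) = UNIV"
    if "\<gamma> \<in> {\<alpha>, \<beta>}" for \<gamma>
    using simple lts_ideal_T_Lambda_conn_class t that unfolding lts_simple_def by blast
  have "t\<beta> \<in> T_Lambda sc tp H (C \<alpha>) \<or> t\<alpha> \<in> T_Lambda sc tp H (C \<beta>)"
    using own J_or_UNIV[of \<alpha>] J_or_UNIV[of \<beta>] by auto
  then show ?thesis
    using mem_if_Troot_in_T_Lambda[OF conn_class_Lambda1] t \<alpha> \<beta> connected_sym
    unfolding conn_class_def by blast
qed

end

theorem theorem3p1:
  fixes sc :: "'k::field \<Rightarrow> 'v::ab_group_add \<Rightarrow> 'v"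
    and tp :: "'v \<Rightarrow> 'v \<Rightarrow> 'v \<Rightarrow> 'v"
    and H :: "'v l0 set"
  assumes lts: "leibniz_triple_system sc tp"
    and mas: "maximal_abelian_subalgebra sc tp H"
    and split: "split_lts sc tp H"
    and sym1: "symmetric_roots (Lambda1 sc H)"
    and sym0: "symmetric_roots (Lambda0 sc tp H)"
  shows "(\<forall>\<alpha>0\<in>Lambda1 sc H.
            T0_part sc tp H (conn_class sc tp H \<alpha>0) \<subseteq> Troot sc H (\<lambda>_. 0) \<and>
            lts_ideal sc tp (T_Lambda sc tp H (conn_class sc tp H \<alpha>0)))
       \<and> (lts_simple sc tp \<longrightarrow>
            (\<forall>\<alpha>\<in>Lambda1 sc H. \<forall>\<beta>\<in>Lambda1 sc H. connected_roots sc tp H \<alpha> \<beta>))"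
proof -
  have "H \<subseteq> L0 tp"
    using mas unfolding maximal_abelian_subalgebra_def abelian_subalgebra_def l0_subspace_def by blast
  then interpret symmetric_split_lts sc tp H
    using lts split sym1 sym0 by unfold_locales
  show ?thesis
    using T0_part_subset_Troot_zero lts_ideal_T_Lambda_conn_class all_connected_if_simple
    unfolding zero_fun_def by blast
qed

end
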